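(* Let $K$ be an infinite field containing $\mathbb{F}_q$, let $B\in\mathrm{GL}_n(K)$, and let $N\in\mathrm{GL}_n(K)$ be such that $N^{-1}BN^{(q)}=\Delta$, where $\Delta$ is the matrix with $1$'s on the subdiagonal, last column $(a_0,a_1,\dots,a_{n-1})^T$ and all other entries $0$. Then the splitting field over $K$ of the system $BX^{(q)}=X$ coincides with the splitting field over $K$ of the additive polynomial $f(Y)=Y^{q^n}-a_0Y-a_1Y^q-\cdots-a_{n-1}Y^{q^{n-1}}$.
   Context: $X^{(q)}$, $N^{(q)}$ denote entrywise $q$-th powers. The splitting field over $K$ of $BX^{(q)}=X$ is the subfield of $K_{\mathrm{sep}}$ generated over $K$ by the coordinates of all its solutions in $K_{\mathrm{sep}}^n$. *)

theory Defs
  imports "HOL-Computational_Algebra.Polynomial" "Jordan_Normal_Form.Matrix"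
begin

text \<open>All fields are subfields of an ambient algebraically closed field of type 'a.\<close>

definition is_subfield :: "'a::field set \<Rightarrow> bool" where
  "is_subfield F \<longleftrightarrow> 0 \<in> F \<and> 1 \<in> F \<and>
     (\<forall>x\<in>F. \<forall>y\<in>F. x + y \<in> F \<and> x * y \<in> F) \<and>
     (\<forall>x\<in>F. - x \<in> F) \<and> (\<forall>x\<in>F. x \<noteq> 0 \<longrightarrow> inverse x \<in> F)"

definition gen_field :: "'a::field set \<Rightarrow> 'a set" where
  "gen_field S = \<Inter>{F. is_subfield F \<and> S \<subseteq> F}"

definition separable_poly :: "'a::field poly \<Rightarrow> bool" where
  "separable_poly p \<longleftrightarrow> coprime p (pderiv p)"

definition sep_closure :: "'a::field set \<Rightarrow> 'a set" where
  "sep_closure K = {x. \<exists>p. p \<noteq> 0 \<and> (\<forall>i. coeff p i \<in> K) \<and> separable_poly p \<and> poly p x = 0}"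

definition mat_qpow :: "nat \<Rightarrow> 'a::field mat \<Rightarrow> 'a mat" where
  "mat_qpow q A = map_mat (\<lambda>x. x ^ q) A"

definition vec_qpow :: "nat \<Rightarrow> 'a::field vec \<Rightarrow> 'a vec" where
  "vec_qpow q v = map_vec (\<lambda>x. x ^ q) v"

definition Delta :: "nat \<Rightarrow> (nat \<Rightarrow> 'a::field) \<Rightarrow> 'a mat" where
  "Delta n a = mat n n (\<lambda>(i,j). if j = n - 1 then a i else if i = j + 1 then 1 else 0)"

definition add_poly :: "nat \<Rightarrow> nat \<Rightarrow> (nat \<Rightarrow> 'a::field) \<Rightarrow> 'a poly" where
  "add_poly q n a = monom 1 (q ^ n) - (\<Sum>i<n. monom (a i) (q ^ i))"

definition system_splitting_field :: "'a::field set \<Rightarrow> nat \<Rightarrow> nat \<Rightarrow> 'a mat \<Rightarrow> 'a set" where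
  "system_splitting_field K q n B =
     gen_field (K \<union> {X $ i | X i. X \<in> carrier_vec n \<and> (\<forall>j<n. X $ j \<in> sep_closure K) \<and>
                                   B *\<^sub>v vec_qpow q X = X \<and> i < n})"

definition poly_splitting_field :: "'a::field set \<Rightarrow> 'a poly \<Rightarrow> 'a set" where
  "poly_splitting_field K f = gen_field (K \<union> {y. y \<in> sep_closure K \<and> poly f y = 0})"

end

theory Submission
  imports Defs "Jordan_Normal_Form.Determinant"
begin

text \<open>
  Writing \<open>X = N Y\<close> turns \<open>B X\<^sup>(\<^sup>q\<^sup>) = X\<close> into the companion system \<open>Y = \<Delta> Y\<^sup>(\<^sup>q\<^sup>)\<close>, that is
  \<open>Y\<^sub>0 = a\<^sub>0 Y\<^sub>n\<^sub>-\<^sub>1\<^sup>q\<close> and \<open>Y\<^sub>i = Y\<^sub>i\<^sub>-\<^sub>1\<^sup>q + a\<^sub>i Y\<^sub>n\<^sub>-\<^sub>1\<^sup>q\<close>. For a root \<open>v\<close> of \<open>f\<close> and a solution \<open>Y\<close>, the pairing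
  \<open>\<Sum> v\<^bsup>q\<^sup>i\<^esup> Y\<^sub>i\<close> is fixed by the Frobenius map, so it lies in \<open>\<bbbF>\<^sub>q \<subseteq> K\<close>. The pairing is
  nondegenerate on both sides: a \<open>q\<close>-polynomial of degree at most \<open>q\<^sup>n\<^sup>-\<^sup>1\<close> cannot vanish at the
  \<open>q\<^sup>n\<close> roots of the separable polynomial \<open>f\<close>; and the solutions, which are parametrised by their
  last coordinate running through the \<open>q\<^sup>n\<close> roots of a separable "dual" \<open>q\<close>-polynomial, satisfy no
  common nontrivial linear relation. Hence the coordinates of a solution form the unique solution of a
  linear system with coefficients \<open>v\<^bsup>q\<^sup>i\<^esup>\<close> and right-hand sides in \<open>K\<close>, and conversely the powers
  \<open>v\<^bsup>q\<^sup>i\<^esup>\<close> of a root solve a uniquely solvable system whose coefficients are solution coordinates.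
  Since Gaussian elimination stays inside any subfield containing the coefficients, each splitting
  field contains the generators of the other.

  The solutions whose coordinates generate the first field must lie in \<open>K\<^sub>s\<^sub>e\<^sub>p\<close>, and they all do:
  the \<open>q\<close>-th power of a \<open>K\<close>-linear form in \<open>Y\<close> is again such a form, and a \<open>K\<close>-linear dependence of
  minimal length among the iterates has nonzero constant term, giving a separable \<open>q\<close>-polynomial
  over \<open>K\<close> that annihilates the form.
\<close>

section \<open>Subfields\<close>

context
  fixes F :: "'a::field set"
  assumes F: "is_subfield F"
begin

lemma subfield_zero: "0 \<in> F"
  and subfield_one: "1 \<in> F"
  and subfield_add: "x \<in> F \<Longrightarrow> y \<in> F \<Longrightarrow> x + y \<in> F"
  and subfield_mult: "x \<in> F \<Longrightarrow> y \<in> F \<Longrightarrow> x * y \<in> F"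
  and subfield_uminus: "x \<in> F \<Longrightarrow> - x \<in> F"
  using F by (auto simp: is_subfield_def)

lemma subfield_inverse: "x \<in> F \<Longrightarrow> inverse x \<in> F"
  using F by (cases "x = 0") (auto simp: is_subfield_def)

lemma subfield_diff: "x \<in> F \<Longrightarrow> y \<in> F \<Longrightarrow> x - y \<in> F"
  using subfield_add[of x "- y"] subfield_uminus[of y] by simp

lemma subfield_divide: "x \<in> F \<Longrightarrow> y \<in> F \<Longrightarrow> x / y \<in> F"
  using subfield_mult[of x "inverse y"] subfield_inverse[of y] by (simp add: divide_inverse)

lemma subfield_power: "x \<in> F \<Longrightarrow> x ^ k \<in> F"
  by (induction k) (auto intro: subfield_one subfield_mult)

lemma subfield_sum: "(\<And>i. i \<in> A \<Longrightarrow> f i \<in> F) \<Longrightarrow> sum f A \<in> F"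
  by (induction A rule: infinite_finite_induct) (auto intro: subfield_zero subfield_add)

end

lemmas subfield_closed = subfield_zero subfield_one subfield_add subfield_mult subfield_uminus
  subfield_diff subfield_divide subfield_power subfield_sum

lemma is_subfield_gen_field: "is_subfield (gen_field S)"
  unfolding gen_field_def is_subfield_def by blast

lemma gen_field_superset: "S \<subseteq> gen_field S"
  unfolding gen_field_def by blast

lemma gen_field_least: "is_subfield F \<Longrightarrow> S \<subseteq> F \<Longrightarrow> gen_field S \<subseteq> F"
  unfolding gen_field_def by blast

lemma is_subfield_poly_splitting_field: "is_subfield (poly_splitting_field K P)"
  and subset_poly_splitting_field: "K \<subseteq> poly_splitting_field K P"
  unfolding poly_splitting_field_def using is_subfield_gen_field gen_field_superset by blast+

lemma root_in_poly_splitting_field: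
  "y \<in> sep_closure K \<Longrightarrow> poly P y = 0 \<Longrightarrow> y \<in> poly_splitting_field K P"
  unfolding poly_splitting_field_def by (rule subsetD[OF gen_field_superset]) simp

lemma poly_splitting_field_least:
  assumes "is_subfield F" "K \<subseteq> F" and "\<And>y. y \<in> sep_closure K \<Longrightarrow> poly P y = 0 \<Longrightarrow> y \<in> F"
  shows "poly_splitting_field K P \<subseteq> F"
  unfolding poly_splitting_field_def using assms by (intro gen_field_least) auto

lemma is_subfield_system_splitting_field: "is_subfield (system_splitting_field K q n B)"
  and subset_system_splitting_field: "K \<subseteq> system_splitting_field K q n B"
  unfolding system_splitting_field_def using is_subfield_gen_field gen_field_superset by blast+

lemma solution_in_system_splitting_field:
  assumes "X \<in> carrier_vec n" "\<forall>j<n. X $ j \<in> sep_closure K" "B *\<^sub>v vec_qpow q X = X" and "i < n"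
  shows "X $ i \<in> system_splitting_field K q n B"
  unfolding system_splitting_field_def by (rule subsetD[OF gen_field_superset]) (use assms in blast)

lemma system_splitting_field_least:
  assumes "is_subfield F" "K \<subseteq> F"
    and "\<And>X i. X \<in> carrier_vec n \<Longrightarrow> B *\<^sub>v vec_qpow q X = X \<Longrightarrow> i < n \<Longrightarrow> X $ i \<in> F"
  shows "system_splitting_field K q n B \<subseteq> F"
  unfolding system_splitting_field_def using assms by (intro gen_field_least) auto


section \<open>Linear systems with coefficients in a subfield\<close>

definition has_nontrivial_solution :: "'a::field set \<Rightarrow> nat \<Rightarrow> 'i set \<Rightarrow> ('i \<Rightarrow> nat \<Rightarrow> 'a) \<Rightarrow> bool"
  where "has_nontrivial_solution F d I A \<longleftrightarrow>
    (\<exists>c. (\<forall>k<d. c k \<in> F) \<and> (\<exists>k<d. c k \<noteq> 0) \<and> (\<forall>i\<in>I. (\<Sum>k<d. A i k * c k) = 0))"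

definition pivot_eliminate :: "('i \<Rightarrow> nat \<Rightarrow> 'a::field) \<Rightarrow> 'i \<Rightarrow> 'i \<Rightarrow> nat \<Rightarrow> 'a"
  where "pivot_eliminate A i0 i k = A i (Suc k) - A i 0 / A i0 0 * A i0 (Suc k)"

lemma sum_pivot_eliminate:
  "(\<Sum>k<d. pivot_eliminate A i0 i k * c k) =
     (\<Sum>k<d. A i (Suc k) * c k) - A i 0 / A i0 0 * (\<Sum>k<d. A i0 (Suc k) * c k)"
  by (simp add: pivot_eliminate_def algebra_simps sum_subtractf sum_distrib_left)

lemma has_nontrivial_solution_pivot_eliminate:
  assumes "has_nontrivial_solution UNIV (Suc d) I A" and "i0 \<in> I" "A i0 0 \<noteq> 0"
  shows "has_nontrivial_solution UNIV d (I - {i0}) (pivot_eliminate A i0)"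
proof -
  obtain c where c: "\<exists>k<Suc d. c k \<noteq> 0" "\<forall>i\<in>I. (\<Sum>k<Suc d. A i k * c k) = 0"
    using assms(1) by (auto simp: has_nontrivial_solution_def)
  have tail: "(\<Sum>k<d. A i (Suc k) * c (Suc k)) = - (A i 0 * c 0)" if "i \<in> I" for i
    using c(2) that unfolding sum.lessThan_Suc_shift by (simp add: add_eq_0_iff)
  have "\<exists>k<d. c (Suc k) \<noteq> 0"
  proof (rule ccontr)
    assume "\<not> ?thesis"
    then have "c 0 = 0" using tail[OF assms(2)] assms(3) by simp
    with \<open>\<not> ?thesis\<close> c(1) show False by (metis less_Suc_eq_0_disj)
  qed
  moreover have "\<forall>i\<in>I - {i0}. (\<Sum>k<d. pivot_eliminate A i0 i k * c (Suc k)) = 0"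
    using assms(2,3) by (auto simp: sum_pivot_eliminate tail)
  ultimately show ?thesis
    unfolding has_nontrivial_solution_def by (intro exI[of _ "\<lambda>k. c (Suc k)"]) auto
qed

lemma has_nontrivial_solution_unpivot:
  assumes F: "is_subfield F" and "i0 \<in> I" "A i0 0 \<noteq> 0" "\<forall>k<Suc d. A i0 k \<in> F"
    and "has_nontrivial_solution F d (I - {i0}) (pivot_eliminate A i0)"
  shows "has_nontrivial_solution F (Suc d) I A"
proof -
  obtain c where c: "\<forall>k<d. c k \<in> F" "\<exists>k<d. c k \<noteq> 0"
      "\<forall>i\<in>I - {i0}. (\<Sum>k<d. pivot_eliminate A i0 i k * c k) = 0"
    using assms(5) by (auto simp: has_nontrivial_solution_def)
  define c0 where "c0 = - (\<Sum>k<d. A i0 (Suc k) * c k) / A i0 0"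
  define c' where "c' k = (if k = 0 then c0 else c (k - 1))" for k
  have split: "(\<Sum>k<Suc d. A i k * c' k) = A i 0 * c0 + (\<Sum>k<d. A i (Suc k) * c k)" for i
    unfolding sum.lessThan_Suc_shift by (simp add: c'_def)
  have "(\<Sum>k<Suc d. A i k * c' k) = 0" if "i \<in> I" for i
  proof (cases "i = i0")
    case True
    then show ?thesis using assms(3) by (simp only: split) (simp add: c0_def)
  next
    case False
    then have "(\<Sum>k<d. A i (Suc k) * c k) = A i 0 / A i0 0 * (\<Sum>k<d. A i0 (Suc k) * c k)"
      using c(3) that by (simp add: sum_pivot_eliminate)
    then show ?thesis using assms(3) by (simp only: split) (simp add: c0_def field_simps)
  qed
  moreover have "c0 \<in> F"
    unfolding c0_def using F assms(4) c(1) by (auto intro!: subfield_closed)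
  then have "\<forall>k<Suc d. c' k \<in> F" using c(1) by (auto simp: c'_def)
  moreover have "\<exists>k<Suc d. c' k \<noteq> 0"
  proof -
    obtain k where "k < d" "c k \<noteq> 0" using c(2) by blast
    then show ?thesis by (intro exI[of _ "Suc k"]) (simp add: c'_def)
  qed
  ultimately show ?thesis unfolding has_nontrivial_solution_def by blast
qed

lemma has_nontrivial_solution_descends:
  assumes F: "is_subfield F" and "\<forall>i\<in>I. \<forall>k<d. A i k \<in> F"
    and "has_nontrivial_solution UNIV d I A \<or> (finite I \<and> card I < d)"
  shows "has_nontrivial_solution F d I A"
  using assms(2,3)
proof (induction d arbitrary: I A)
  case 0
  then show ?case by (auto simp: has_nontrivial_solution_def)
next
  case (Suc d)
  show ?case
  proof (cases "\<exists>i0\<in>I. A i0 0 \<noteq> 0")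
    case False
    then show ?thesis using F unfolding has_nontrivial_solution_def
      by (intro exI[of _ "\<lambda>k. if k = 0 then 1 else 0"])
        (auto simp: sum.lessThan_Suc_shift simp del: sum.lessThan_Suc intro: subfield_zero subfield_one)
  next
    case True
    then obtain i0 where i0: "i0 \<in> I" "A i0 0 \<noteq> 0" by blast
    have "has_nontrivial_solution UNIV d (I - {i0}) (pivot_eliminate A i0) \<or>
        (finite (I - {i0}) \<and> card (I - {i0}) < d)"
      using Suc.prems(2) has_nontrivial_solution_pivot_eliminate[of d I A, OF _ i0]
        card_Diff1_less[OF _ i0(1)] by fastforce
    moreover have "\<forall>i\<in>I - {i0}. \<forall>k<d. pivot_eliminate A i0 i k \<in> F"
      using Suc.prems(1) i0 F by (auto simp: pivot_eliminate_def intro!: subfield_closed)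
    ultimately show ?thesis
      using Suc.IH has_nontrivial_solution_unpivot[of F i0 I A d, OF F i0] Suc.prems(1) i0(1) by blast
  qed
qed

lemma unique_solution_in_subfield:
  fixes R :: "((nat \<Rightarrow> 'a::field) \<times> 'a) set"
  assumes F: "is_subfield F"
    and R_in_F: "\<forall>(r, b)\<in>R. (\<forall>k<d. r k \<in> F) \<and> b \<in> F"
    and solves: "\<forall>(r, b)\<in>R. (\<Sum>k<d. r k * x k) = b"
    and unique: "\<And>y. \<forall>(r, b)\<in>R. (\<Sum>k<d. r k * y k) = 0 \<Longrightarrow> \<forall>k<d. y k = 0"
  shows "\<forall>k<d. x k \<in> F"
proof -
  define A :: "(nat \<Rightarrow> 'a) \<times> 'a \<Rightarrow> nat \<Rightarrow> 'a"
    where "A rb k = (if k < d then fst rb k else - snd rb)" for rb k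
  have sum_A: "(\<Sum>k<Suc d. A rb k * c k) = (\<Sum>k<d. fst rb k * c k) - snd rb * c d" for rb c
    by (simp add: A_def)
  have "has_nontrivial_solution UNIV (Suc d) R A"
    unfolding has_nontrivial_solution_def
    by (rule exI[of _ "\<lambda>k. if k < d then x k else 1"])
      (use solves in \<open>auto simp: sum_A simp del: sum.lessThan_Suc\<close>)
  moreover have "\<forall>rb\<in>R. \<forall>k<Suc d. A rb k \<in> F"
    using R_in_F F by (auto simp: A_def intro!: subfield_uminus)
  ultimately have "has_nontrivial_solution F (Suc d) R A"
    using has_nontrivial_solution_descends[OF F] by blast
  then obtain c where c: "\<forall>k<Suc d. c k \<in> F" "\<exists>k<Suc d. c k \<noteq> 0"
      "\<forall>rb\<in>R. (\<Sum>k<d. fst rb k * c k) - snd rb * c d = 0"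
    unfolding has_nontrivial_solution_def sum_A by blast
  have "c d \<noteq> 0"
  proof
    assume "c d = 0"
    then have "\<forall>k<d. c k = 0" using c(3) by (intro unique) force
    with c(2) \<open>c d = 0\<close> show False by (metis less_Suc_eq)
  qed
  define z where "z k = c k / c d" for k
  have z_solves: "(\<Sum>k<d. r k * z k) = b" if "(r, b) \<in> R" for r b
  proof -
    have "(\<Sum>k<d. r k * c k) = b * c d" using c(3) that by force
    then show ?thesis using \<open>c d \<noteq> 0\<close> by (simp add: z_def sum_divide_distrib[symmetric])
  qed
  have "\<forall>(r, b)\<in>R. (\<Sum>k<d. r k * (x k - z k)) = 0"
    using solves z_solves by (auto simp: right_diff_distrib sum_subtractf)
  then have "\<forall>k<d. x k = z k" using unique by fastforce
  moreover have "\<forall>k<d. z k \<in> F" using c(1) F by (auto simp: z_def intro: subfield_divide)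
  ultimately show ?thesis by auto
qed

lemma upper_triangular_system_trivial:
  fixes z :: "nat \<Rightarrow> 'a::semiring_no_zero_divisors"
  assumes "\<And>k. k < n \<Longrightarrow> (\<Sum>i<n. if k \<le> i then z i * T i k else 0) = 0"
    and "\<And>k. k < n \<Longrightarrow> T k k \<noteq> 0"
  shows "\<forall>i<n. z i = 0"
  using assms
proof (induction n)
  case (Suc n)
  have "(\<Sum>i<n. if n \<le> i then z i * T i n else 0) = 0" by (intro sum.neutral) auto
  then have "z n * T n n = 0" using Suc.prems(1)[of n] by simp
  then have "z n = 0" using Suc.prems(2)[of n] by simp
  have "(\<Sum>i<n. if k \<le> i then z i * T i k else 0) = 0" if "k < n" for k
    using Suc.prems(1)[of k] that \<open>z n = 0\<close> by simp
  then have "\<forall>i<n. z i = 0" using Suc.IH Suc.prems(2) by simp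
  with \<open>z n = 0\<close> show ?case by (simp add: less_Suc_eq)
qed simp


section \<open>Polynomials with simple roots\<close>

lemma degree_le_card_roots:
  fixes P :: "'a::alg_closed_field poly"
  assumes "P \<noteq> 0" and "\<And>x. poly P x = 0 \<Longrightarrow> poly (pderiv P) x \<noteq> 0"
  shows "degree P \<le> card {x. poly P x = 0}"
  using assms
proof (induction "degree P" arbitrary: P rule: less_induct)
  case (less P)
  show ?case
  proof (cases "degree P = 0")
    case False
    then obtain x where x: "poly P x = 0" using alg_closed_imp_poly_has_root by blast
    then obtain Q where PQ: "P = [:-x, 1:] * Q" using poly_eq_0_iff_dvd by (blast elim: dvdE)
    have "Q \<noteq> 0" using less.prems PQ by auto
    have deg: "degree P = Suc (degree Q)" unfolding PQ using \<open>Q \<noteq> 0\<close> by (subst degree_mult_eq) auto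
    have pderiv_P: "pderiv P = Q + [:-x, 1:] * pderiv Q"
      by (simp only: PQ pderiv_mult) (simp add: pderiv_pCons algebra_simps)
    have "poly Q x \<noteq> 0" using less.prems(2)[OF x] by (simp add: pderiv_P)
    moreover have "poly (pderiv Q) y \<noteq> 0" if "poly Q y = 0" for y
    proof -
      have "poly P y = 0" using that by (simp add: PQ)
      then have "poly (pderiv P) y \<noteq> 0" by (rule less.prems(2))
      then show ?thesis using that by (simp add: pderiv_P)
    qed
    then have "degree Q \<le> card {x. poly Q x = 0}"
      using less.hyps[of Q] \<open>Q \<noteq> 0\<close> deg by simp
    moreover have "{x. poly P x = 0} = insert x {x. poly Q x = 0}" by (auto simp: PQ)
    ultimately show ?thesis using deg poly_roots_finite[OF \<open>Q \<noteq> 0\<close>] by simp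
  qed simp
qed

lemma separable_poly_if_pderiv_const:
  fixes P :: "'a::field poly"
  assumes "pderiv P = [:c:]" and "c \<noteq> 0"
  shows "separable_poly P"
proof -
  have "is_unit [:c:]" using assms(2) by (simp add: is_unit_const_poly_iff dvd_field_iff)
  then show ?thesis unfolding separable_poly_def assms(1) by (rule is_unit_right_imp_coprime)
qed


section \<open>Matrices\<close>

lemma index_mult_mat_vec_sum:
  "A \<in> carrier_mat n k \<Longrightarrow> v \<in> carrier_vec k \<Longrightarrow> i < n \<Longrightarrow>
    (A *\<^sub>v v) $ i = (\<Sum>j<k. A $$ (i, j) * v $ j)"
  by (simp add: scalar_prod_def atLeast0LessThan)

lemma index_mult_mat_sum:
  "A \<in> carrier_mat n k \<Longrightarrow> B \<in> carrier_mat k l \<Longrightarrow> i < n \<Longrightarrow> j < l \<Longrightarrow>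
    (A * B) $$ (i, j) = (\<Sum>t<k. A $$ (i, t) * B $$ (t, j))"
  by (simp add: scalar_prod_def atLeast0LessThan)

lemma mult_mat_vec_in_subfield:
  assumes "is_subfield F" "A \<in> carrier_mat n k" "elements_mat A \<subseteq> F"
    and "v \<in> carrier_vec k" "\<forall>j<k. v $ j \<in> F" and "i < n"
  shows "(A *\<^sub>v v) $ i \<in> F"
  unfolding index_mult_mat_vec_sum[OF assms(2,4,6)]
  using assms by (blast intro: subfield_sum subfield_mult)

lemma inverse_mat_in_subfield:
  assumes F: "is_subfield F" and A: "A \<in> carrier_mat n n" "elements_mat A \<subseteq> F"
    and A': "A' \<in> carrier_mat n n" "A' * A = 1\<^sub>m n"
  shows "elements_mat A' \<subseteq> F"
proof
  have AA': "A * A' = 1\<^sub>m n" using mat_mult_left_right_inverse[OF A'(1) A(1) A'(2)] .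
  fix x assume "x \<in> elements_mat A'"
  then obtain i l where il: "i < n" "l < n" "x = A' $$ (i, l)" using A' by auto
  define R :: "((nat \<Rightarrow> 'a) \<times> 'a) set"
    where "R = {(\<lambda>k. A $$ (k, j), if j = i then 1 else 0) | j. j < n}"
  have "\<forall>k<n. A' $$ (i, k) \<in> F"
  proof (rule unique_solution_in_subfield[OF F, of R])
    show "\<forall>(r, b)\<in>R. (\<forall>k<n. r k \<in> F) \<and> b \<in> F"
      using A F by (auto simp: R_def intro: subfield_zero subfield_one)
    have "(\<Sum>k<n. A $$ (k, j) * A' $$ (i, k)) = (if j = i then 1 else 0)" if "j < n" for j
    proof -
      have "(\<Sum>k<n. A $$ (k, j) * A' $$ (i, k)) = (A' * A) $$ (i, j)"
        unfolding index_mult_mat_sum[OF A'(1) A(1) il(1) that]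
        by (intro sum.cong refl) (rule mult.commute)
      also have "\<dots> = (if j = i then 1 else 0)" using A'(2) il(1) that by auto
      finally show ?thesis .
    qed
    then show "\<forall>(r, b)\<in>R. (\<Sum>k<n. r k * A' $$ (i, k)) = b" by (auto simp: R_def)
    fix y assume "\<forall>(r, b)\<in>R. (\<Sum>k<n. r k * y k) = 0"
    then have y: "(\<Sum>k<n. A $$ (k, j) * y k) = 0" if "j < n" for j
      using that by (auto simp: R_def)
    show "\<forall>k<n. y k = 0"
    proof (intro allI impI)
      fix l assume "l < n"
      have "y l = (\<Sum>k<n. y k * (A * A') $$ (k, l))"
        using \<open>l < n\<close> by (simp add: AA' if_distrib cong: if_cong)
      also have "\<dots> = (\<Sum>k<n. \<Sum>j<n. A $$ (k, j) * y k * A' $$ (j, l))"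
        using \<open>l < n\<close>
        by (intro sum.cong refl) (simp add: index_mult_mat_sum[OF A(1) A'(1)] sum_distrib_left mult_ac)
      also have "\<dots> = (\<Sum>j<n. (\<Sum>k<n. A $$ (k, j) * y k) * A' $$ (j, l))"
        by (subst sum.swap) (simp add: sum_distrib_right)
      finally show "y l = 0" by (simp add: y)
    qed
  qed
  then show "x \<in> F" using il by simp
qed

lemma Delta_carrier [simp]: "Delta n a \<in> carrier_mat n n"
  by (simp add: Delta_def)

lemma index_Delta_mult_vec:
  assumes "Z \<in> carrier_vec n" and "i < n"
  shows "(Delta n a *\<^sub>v Z) $ i = (if i = 0 then 0 else Z $ (i - 1)) + a i * Z $ (n - 1)"
proof -
  have "(Delta n a *\<^sub>v Z) $ i = (\<Sum>j<n. Delta n a $$ (i, j) * Z $ j)"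
    using assms by (intro index_mult_mat_vec_sum) auto
  also have "\<dots> = (\<Sum>j<n. (if j = n - 1 then a i * Z $ (n - 1) else 0) +
                         (if j = i - 1 then (if i = 0 then 0 else Z $ (i - 1)) else 0))"
    using assms(2) by (intro sum.cong) (auto simp: Delta_def)
  finally show ?thesis using assms(2) by (simp add: sum.distrib)
qed

lemma det_Delta_eq_0:
  assumes "n > 0" and "a 0 = 0"
  shows "det (Delta n a) = 0"
proof -
  have "transpose_mat (Delta n a) *\<^sub>v unit_vec n 0 = 0\<^sub>v n"
    using assms by (intro eq_vecI) (auto simp: Delta_def)
  moreover have "unit_vec n 0 \<noteq> (0\<^sub>v n :: 'a vec)"
    using assms(1) by (metis index_unit_vec(1) index_zero_vec(1) zero_neq_one)
  ultimately have "det (transpose_mat (Delta n a)) = 0"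
    by (subst det_0_iff_vec_prod_zero_field[of _ n]) (auto intro!: exI[of _ "unit_vec n 0"])
  then show ?thesis by (simp add: det_transpose[OF Delta_carrier])
qed

lemma mat_qpow_carrier [simp]: "A \<in> carrier_mat r c \<Longrightarrow> mat_qpow q A \<in> carrier_mat r c"
  unfolding mat_qpow_def by simp

lemma vec_qpow_carrier [simp]: "v \<in> carrier_vec r \<Longrightarrow> vec_qpow q v \<in> carrier_vec r"
  unfolding vec_qpow_def by simp

lemma mat_qpow_one: "q > 0 \<Longrightarrow> mat_qpow q (1\<^sub>m n :: 'a::field mat) = 1\<^sub>m n"
  by (rule eq_matI) (auto simp: mat_qpow_def)

context
  fixes q m :: nat
  assumes prime_CHAR: "prime CHAR('a::field)" and q: "q = CHAR('a) ^ m"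
begin

lemma mat_qpow_mult:
  fixes A B :: "'a mat"
  assumes A: "A \<in> carrier_mat n k" and B: "B \<in> carrier_mat k l"
  shows "mat_qpow q (A * B) = mat_qpow q A * mat_qpow q B"
proof (rule eq_matI)
  fix i j assume "i < dim_row (mat_qpow q A * mat_qpow q B)" "j < dim_col (mat_qpow q A * mat_qpow q B)"
  then have ij: "i < n" "j < l" using A B by (auto simp: mat_qpow_def)
  have "mat_qpow q (A * B) $$ (i, j) = ((A * B) $$ (i, j)) ^ q"
    using A B ij by (simp add: mat_qpow_def)
  also have "\<dots> = (\<Sum>t<k. (A $$ (i, t)) ^ q * (B $$ (t, j)) ^ q)"
    by (simp only: index_mult_mat_sum[OF A B ij] freshmans_dream_sum'[OF prime_CHAR q] power_mult_distrib)
  also have "\<dots> = (mat_qpow q A * mat_qpow q B) $$ (i, j)"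
    using A B ij by (subst index_mult_mat_sum[of _ n k _ l]) (auto simp: mat_qpow_def)
  finally show "mat_qpow q (A * B) $$ (i, j) = (mat_qpow q A * mat_qpow q B) $$ (i, j)" .
qed (use A B in \<open>auto simp: mat_qpow_def\<close>)

lemma vec_qpow_mult:
  fixes A :: "'a mat"
  assumes A: "A \<in> carrier_mat n k" and v: "v \<in> carrier_vec k"
  shows "vec_qpow q (A *\<^sub>v v) = mat_qpow q A *\<^sub>v vec_qpow q v"
proof (rule eq_vecI)
  fix i assume "i < dim_vec (mat_qpow q A *\<^sub>v vec_qpow q v)"
  then have i: "i < n" using A by (simp add: mat_qpow_def)
  have "vec_qpow q (A *\<^sub>v v) $ i = ((A *\<^sub>v v) $ i) ^ q"
    using A i by (simp add: vec_qpow_def)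
  also have "\<dots> = (\<Sum>j<k. (A $$ (i, j)) ^ q * (v $ j) ^ q)"
    by (simp only: index_mult_mat_vec_sum[OF A v i] freshmans_dream_sum'[OF prime_CHAR q] power_mult_distrib)
  also have "\<dots> = (mat_qpow q A *\<^sub>v vec_qpow q v) $ i"
    using A v i by (subst index_mult_mat_vec_sum[of _ n k]) (auto simp: mat_qpow_def vec_qpow_def)
  finally show "vec_qpow q (A *\<^sub>v v) $ i = (mat_qpow q A *\<^sub>v vec_qpow q v) $ i" .
qed (use A in \<open>auto simp: vec_qpow_def mat_qpow_def\<close>)

end


lemma det_neq_0_if_left_inverse:
  assumes "A \<in> carrier_mat n n" "A' \<in> carrier_mat n n" and "A' * A = 1\<^sub>m n"
  shows "det (A :: 'a::comm_ring_1 mat) \<noteq> 0"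
proof -
  have "det A' * det A = 1" using assms by (metis det_mult det_one)
  then show ?thesis by auto
qed

lemma det_neq_0_if_invertible_mat:
  assumes "A \<in> carrier_mat n n" and "invertible_mat (A :: 'a::comm_ring_1 mat)"
  shows "det A \<noteq> 0"
proof -
  obtain B where "A * B = 1\<^sub>m n" "B * A = 1\<^sub>m (dim_row B)"
    using assms unfolding invertible_mat_def inverts_mat_def by auto
  then have "B \<in> carrier_mat n n" "B * A = 1\<^sub>m n"
    using assms(1) by (metis carrier_matD carrier_matI index_mult_mat(2,3) index_one_mat(2,3))+
  then show ?thesis using assms(1) det_neq_0_if_left_inverse by blast
qed

lemma Delta_first_coeff_neq_0:
  fixes B N Ninv :: "'a::field mat"
  assumes CHAR: "prime CHAR('a)" "q = CHAR('a) ^ m" and "n > 0"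
    and B: "B \<in> carrier_mat n n" "invertible_mat B"
    and N: "N \<in> carrier_mat n n" "Ninv \<in> carrier_mat n n" "Ninv * N = 1\<^sub>m n"
    and conjugate: "Ninv * B * mat_qpow q N = Delta n a"
  shows "a 0 \<noteq> 0"
proof
  assume "a 0 = 0"
  have "q > 0" using CHAR by (simp add: prime_gt_0_nat)
  have "mat_qpow q Ninv * mat_qpow q N = 1\<^sub>m n"
    using mat_qpow_mult[OF CHAR N(2,1)] N(3) \<open>q > 0\<close> by (simp add: mat_qpow_one)
  then have "det (mat_qpow q N) \<noteq> 0" using N by (intro det_neq_0_if_left_inverse) auto
  moreover have "det Ninv \<noteq> 0" using N det_neq_0_if_left_inverse[OF N(2,1)] mat_mult_left_right_inverse
    by blast
  moreover have "det B \<noteq> 0" using B by (rule det_neq_0_if_invertible_mat)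
  moreover have "det (Delta n a) = det Ninv * det B * det (mat_qpow q N)"
    unfolding conjugate[symmetric] using B N
    by (simp add: det_mult[of "Ninv * B" n] det_mult[OF N(2) B(1)])
  ultimately show False using det_Delta_eq_0[of n a, OF \<open>n > 0\<close> \<open>a 0 = 0\<close>] by simp
qed


section \<open>Additive polynomials over a subfield containing \<open>\<bbbF>\<^sub>q\<close>\<close>

locale Fq_subfield =
  fixes K :: "'a::alg_closed_field set" and q m :: nat
  assumes subfield_K: "is_subfield K"
    and prime_CHAR: "prime CHAR('a)" and m_pos: "m \<ge> 1" and q_def: "q = CHAR('a) ^ m"
    and Fq_subset: "{x. x ^ q = x} \<subseteq> K"
begin

lemma q_gt_1 [simp]: "1 < q"
proof -
  have "2 \<le> CHAR('a)" using prime_CHAR prime_ge_2_nat by blast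
  then have "CHAR('a) ^ 1 \<le> q" unfolding q_def using m_pos by (intro power_increasing) auto
  then show ?thesis using \<open>2 \<le> CHAR('a)\<close> by simp
qed

lemma q_gt_Suc_0 [simp]: "Suc 0 < q" and q_pos [simp]: "0 < q"
  using q_gt_1 by simp_all

lemma of_nat_q [simp]: "of_nat q = (0 :: 'a)"
  unfolding of_nat_eq_0_iff_char_dvd q_def using m_pos by (intro dvd_power) auto

lemma power_q_sum: "(sum f A) ^ q = (\<Sum>i\<in>A. (f i :: 'a) ^ q)"
  by (rule freshmans_dream_sum'[OF prime_CHAR q_def])

lemma power_q_inj: "(x :: 'a) ^ q = y ^ q \<Longrightarrow> x = y"
  using freshmans_dream'[OF prime_CHAR q_def, of "x - y" y] by simp

definition q_poly :: "(nat \<Rightarrow> 'a) \<Rightarrow> nat \<Rightarrow> 'a poly"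
  where "q_poly c d = (\<Sum>i<d. monom (c i) (q ^ i))"

lemma poly_q_poly: "poly (q_poly c d) x = (\<Sum>i<d. c i * x ^ (q ^ i))"
  by (simp add: q_poly_def poly_sum poly_monom)

lemma coeff_q_poly: "coeff (q_poly c d) j = (\<Sum>i<d. if q ^ i = j then c i else 0)"
  by (simp add: q_poly_def coeff_sum)

lemma coeff_q_poly_q_power: "i < d \<Longrightarrow> coeff (q_poly c d) (q ^ i) = c i"
  by (simp add: coeff_q_poly power_inject_exp[OF q_gt_1])

lemma q_poly_eq_0_iff: "q_poly c d = 0 \<longleftrightarrow> (\<forall>i<d. c i = 0)"
proof
  show "q_poly c d = 0 \<Longrightarrow> \<forall>i<d. c i = 0" by (metis coeff_0 coeff_q_poly_q_power)
qed (simp add: q_poly_def)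

lemma degree_q_poly: "degree (q_poly c (Suc d)) \<le> q ^ d"
proof (rule degree_le, intro allI impI)
  fix j assume "q ^ d < j"
  moreover have "q ^ i \<le> q ^ d" if "i < Suc d" for i
    using that by simp
  ultimately have "q ^ i \<noteq> j" if "i < Suc d" for i
    using that by fastforce
  then show "coeff (q_poly c (Suc d)) j = 0" by (simp add: coeff_q_poly)
qed

lemma pderiv_q_poly: "pderiv (q_poly c (Suc d)) = [:c 0:]"
proof -
  have pderiv_sum: "pderiv (sum f A) = (\<Sum>x\<in>A. pderiv (f x))" for f :: "nat \<Rightarrow> 'a poly" and A
    using higher_pderiv_sum[of 1 f A] by simp
  have "pderiv (q_poly c (Suc d)) = (\<Sum>i<Suc d. monom (of_nat (q ^ i) * c i) (q ^ i - 1))"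
    by (simp only: q_poly_def pderiv_sum pderiv_monom)
  also have "\<dots> = monom (c 0) 0"
    unfolding sum.lessThan_Suc_shift by simp
  finally show ?thesis by (simp add: monom_0)
qed

lemma card_roots_q_poly:
  assumes "c 0 \<noteq> 0" and "c d \<noteq> 0"
  shows "q ^ d \<le> card {x. poly (q_poly c (Suc d)) x = 0}"
proof -
  have "q_poly c (Suc d) \<noteq> 0" using assms(1) by (auto simp: q_poly_eq_0_iff)
  then have "degree (q_poly c (Suc d)) \<le> card {x. poly (q_poly c (Suc d)) x = 0}"
    by (rule degree_le_card_roots) (simp add: pderiv_q_poly assms(1))
  moreover have "degree (q_poly c (Suc d)) = q ^ d"
    using assms(2) degree_q_poly by (intro antisym le_degree) (simp_all add: coeff_q_poly_q_power)
  ultimately show ?thesis by simp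
qed

lemma q_poly_root_in_sep_closure:
  assumes "c 0 \<noteq> 0" and "\<forall>i\<le>d. c i \<in> K" and "poly (q_poly c (Suc d)) x = 0"
  shows "x \<in> sep_closure K"
  unfolding sep_closure_def
proof (intro CollectI exI conjI allI)
  show "q_poly c (Suc d) \<noteq> 0" using assms(1) by (auto simp: q_poly_eq_0_iff)
  show "coeff (q_poly c (Suc d)) i \<in> K" for i
    unfolding coeff_q_poly using assms(2) subfield_K by (auto intro!: subfield_closed)
  show "separable_poly (q_poly c (Suc d))"
    using assms(1) by (rule separable_poly_if_pderiv_const[OF pderiv_q_poly])
qed (fact assms(3))

lemma q_poly_vanishing_eq_0:
  assumes "finite S" and "q ^ d \<le> card S" and "\<forall>x\<in>S. poly (q_poly c d) x = 0"
  shows "\<forall>i<d. c i = 0"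
proof -
  have "degree (q_poly c d) < q ^ d"
  proof (cases d)
    case (Suc d')
    then show ?thesis using degree_q_poly[of c d'] by (simp add: order_le_less_trans)
  qed (simp add: q_poly_def)
  then have "q_poly c d = 0"
    using assms by (intro poly_eqI_degree[of S]) auto
  then show ?thesis by (simp add: q_poly_eq_0_iff)
qed

end


section \<open>The companion system \<open>Y = \<Delta> Y\<^sup>(\<^sup>q\<^sup>)\<close>\<close>

locale companion_system = Fq_subfield +
  fixes n :: nat and a :: "nat \<Rightarrow> 'a::alg_closed_field"
  assumes n_pos: "n > 0" and a_in_K: "\<forall>i<n. a i \<in> K" and a0_neq_0: "a 0 \<noteq> 0"
begin

abbreviation f :: "'a poly" where "f \<equiv> add_poly q n a"

lemma f_eq_q_poly: "f = q_poly (\<lambda>i. if i = n then 1 else - a i) (Suc n)"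
proof -
  have "(\<Sum>i<n. monom (if i = n then 1 else - a i) (q ^ i)) = - (\<Sum>i<n. monom (a i) (q ^ i))"
    by (simp add: sum_negf[symmetric] minus_monom)
  then show ?thesis by (simp add: add_poly_def q_poly_def)
qed

lemma f_root_in_sep_closure: "poly f v = 0 \<Longrightarrow> v \<in> sep_closure K"
  unfolding f_eq_q_poly
  by (rule q_poly_root_in_sep_closure) (use a0_neq_0 n_pos a_in_K subfield_K in \<open>auto intro: subfield_closed\<close>)

lemma card_roots_f: "q ^ n \<le> card {v. poly f v = 0}"
  unfolding f_eq_q_poly by (rule card_roots_q_poly) (use a0_neq_0 n_pos in auto)

lemma finite_roots_f: "finite {v. poly f v = 0}"
  by (rule poly_roots_finite) (auto simp: f_eq_q_poly q_poly_eq_0_iff)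

definition Delta_solution :: "(nat \<Rightarrow> 'a) \<Rightarrow> bool"
  where "Delta_solution Y \<longleftrightarrow> (\<forall>i<n. Y i = (if i = 0 then 0 else Y (i - 1) ^ q) + a i * Y (n - 1) ^ q)"

lemma Delta_solutionD:
  "Delta_solution Y \<Longrightarrow> i < n \<Longrightarrow> Y i = (if i = 0 then 0 else Y (i - 1) ^ q) + a i * Y (n - 1) ^ q"
  unfolding Delta_solution_def by blast

lemma Delta_solution_iff: "Delta_solution Y \<longleftrightarrow> Delta n a *\<^sub>v vec_qpow q (vec n Y) = vec n Y"
proof -
  have "(Delta n a *\<^sub>v vec_qpow q (vec n Y)) $ i =
      (if i = 0 then 0 else Y (i - 1) ^ q) + a i * Y (n - 1) ^ q" if "i < n" for i
    using index_Delta_mult_vec[of "vec_qpow q (vec n Y)" n i a] that n_pos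
    by (auto simp: vec_qpow_def)
  note entry = this
  show ?thesis
  proof
    assume Y: "Delta_solution Y"
    show "Delta n a *\<^sub>v vec_qpow q (vec n Y) = vec n Y"
    proof (rule eq_vecI)
      fix i assume "i < dim_vec (vec n Y)"
      then have "i < n" by simp
      then show "(Delta n a *\<^sub>v vec_qpow q (vec n Y)) $ i = vec n Y $ i"
        using entry[OF \<open>i < n\<close>] Delta_solutionD[OF Y \<open>i < n\<close>] by simp
    qed (simp add: Delta_def)
  next
    assume eq: "Delta n a *\<^sub>v vec_qpow q (vec n Y) = vec n Y"
    show "Delta_solution Y" unfolding Delta_solution_def
    proof (intro allI impI)
      fix i assume "i < n"
      then show "Y i = (if i = 0 then 0 else Y (i - 1) ^ q) + a i * Y (n - 1) ^ q"
        using entry[OF \<open>i < n\<close>] eq by simp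
    qed
  qed
qed

lemma pairing_in_K:
  assumes "poly f v = 0" and "Delta_solution Y"
  shows "(\<Sum>i<n. v ^ (q ^ i) * Y i) \<in> K"
proof -
  obtain n' where n': "n = Suc n'" using n_pos by (cases n) auto
  have root: "v ^ (q ^ n) = (\<Sum>i<n. a i * v ^ (q ^ i))"
    using assms(1) by (simp add: add_poly_def poly_monom poly_sum)
  have Y: "Y i = (if i = 0 then 0 else Y (i - 1) ^ q) + a i * Y n' ^ q" if "i < n" for i
    using Delta_solutionD[OF assms(2) that] n' by simp
  have "(\<Sum>i<n. v ^ (q ^ i) * Y i) ^ q = (\<Sum>i<n'. v ^ (q ^ Suc i) * Y i ^ q) + v ^ (q ^ n) * Y n' ^ q"
    unfolding power_q_sum by (simp add: n' power_mult_distrib power_mult[symmetric] mult.commute)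
  also have "(\<Sum>i<n'. v ^ (q ^ Suc i) * Y i ^ q) =
      (\<Sum>i<n. v ^ (q ^ i) * (if i = 0 then 0 else Y (i - 1) ^ q))"
    unfolding n' sum.lessThan_Suc_shift by simp
  also have "v ^ (q ^ n) * Y n' ^ q = (\<Sum>i<n. v ^ (q ^ i) * (a i * Y n' ^ q))"
    by (simp add: root sum_distrib_left sum_distrib_right mult_ac)
  also have "(\<Sum>i<n. v ^ (q ^ i) * (if i = 0 then 0 else Y (i - 1) ^ q)) +
      (\<Sum>i<n. v ^ (q ^ i) * (a i * Y n' ^ q)) = (\<Sum>i<n. v ^ (q ^ i) * Y i)"
    unfolding sum.distrib[symmetric]
  proof (rule sum.cong[OF refl])
    fix i assume "i \<in> {..<n}"
    then show "v ^ (q ^ i) * (if i = 0 then 0 else Y (i - 1) ^ q) + v ^ (q ^ i) * (a i * Y n' ^ q) =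
        v ^ (q ^ i) * Y i"
      using Y[of i] by (simp add: distrib_left)
  qed
  finally show ?thesis using Fq_subset by blast
qed

lemma vanishing_on_roots_f_imp_zero:
  assumes "\<forall>v. poly f v = 0 \<longrightarrow> (\<Sum>i<n. v ^ (q ^ i) * y i) = 0"
  shows "\<forall>i<n. y i = 0"
  using assms card_roots_f finite_roots_f
  by (intro q_poly_vanishing_eq_0) (auto simp: poly_q_poly mult.commute)

definition root_solution :: "'a \<Rightarrow> nat \<Rightarrow> 'a"
  where "root_solution u i = (\<Sum>k\<le>i. a (i - k) ^ (q ^ k) * u ^ (q ^ Suc k))"

lemma root_solution_0: "root_solution u 0 = a 0 * u ^ q"
  by (simp add: root_solution_def)

lemma root_solution_Suc: "root_solution u (Suc i) = root_solution u i ^ q + a (Suc i) * u ^ q"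
  unfolding root_solution_def sum.atMost_Suc_shift power_q_sum
  by (simp add: power_mult_distrib power_mult[symmetric] mult.commute)

definition dual_poly :: "'a poly"
  where "dual_poly = q_poly (\<lambda>k. if k = 0 then -1 else a (n - k) ^ (q ^ (k - 1))) (Suc n)"

lemma poly_dual_poly: "poly dual_poly u = root_solution u (n - 1) - u"
proof -
  obtain n' where n': "n = Suc n'" using n_pos by (cases n) auto
  show ?thesis
    unfolding dual_poly_def poly_q_poly sum.lessThan_Suc_shift root_solution_def
    by (simp add: n' lessThan_Suc_atMost)
qed

lemma Delta_solution_root_solution:
  assumes "poly dual_poly u = 0"
  shows "Delta_solution (root_solution u)"
  unfolding Delta_solution_def
proof (intro allI impI)
  fix i assume "i < n"
  have last: "root_solution u (n - 1) = u" using assms by (simp add: poly_dual_poly)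
  show "root_solution u i = (if i = 0 then 0 else root_solution u (i - 1) ^ q) +
      a i * root_solution u (n - 1) ^ q"
    by (cases i) (simp_all add: last[simplified] root_solution_0 root_solution_Suc)
qed

lemma card_roots_dual_poly: "q ^ n \<le> card {u. poly dual_poly u = 0}"
  unfolding dual_poly_def by (rule card_roots_q_poly) (use a0_neq_0 n_pos in auto)

lemma finite_roots_dual_poly: "finite {u. poly dual_poly u = 0}"
  by (rule poly_roots_finite) (auto simp: dual_poly_def q_poly_eq_0_iff)

lemma lincomb_root_solution:
  "(\<Sum>i<n. z i * root_solution u i) =
    poly (q_poly (\<lambda>k. \<Sum>i<n. if k \<le> i then z i * a (i - k) ^ (q ^ k) else 0) n) (u ^ q)"
proof -
  have "root_solution u i = (\<Sum>k<n. if k \<le> i then a (i - k) ^ (q ^ k) * (u ^ q) ^ (q ^ k) else 0)"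
    if "i < n" for i
  proof -
    have "{k \<in> {..<n}. k \<le> i} = {..i}" using that by auto
    then show ?thesis
      unfolding root_solution_def sum.inter_filter[OF finite_lessThan, symmetric]
      by (simp add: power_mult[symmetric] mult.commute)
  qed
  then have "(\<Sum>i<n. z i * root_solution u i) =
      (\<Sum>i<n. \<Sum>k<n. if k \<le> i then z i * a (i - k) ^ (q ^ k) * (u ^ q) ^ (q ^ k) else 0)"
    by (simp add: sum_distrib_left if_distrib mult.assoc cong: if_cong)
  also have "\<dots> = (\<Sum>k<n. (\<Sum>i<n. if k \<le> i then z i * a (i - k) ^ (q ^ k) else 0) * (u ^ q) ^ (q ^ k))"
  proof -
    have if_times: "(if c then x else 0) * y = (if c then x * y else 0)" for c and x y :: 'a
      by simp
    show ?thesis by (subst sum.swap) (simp add: sum_distrib_right if_times)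
  qed
  finally show ?thesis by (simp add: poly_q_poly)
qed

lemma vanishing_on_root_solutions_imp_zero:
  assumes "\<forall>u. poly dual_poly u = 0 \<longrightarrow> (\<Sum>i<n. z i * root_solution u i) = 0"
  shows "\<forall>i<n. z i = 0"
proof -
  let ?U = "(\<lambda>u. u ^ q) ` {u. poly dual_poly u = 0}"
  have "card ?U = card {u. poly dual_poly u = 0}"
    by (rule card_image) (auto intro: inj_onI power_q_inj)
  then have "q ^ n \<le> card ?U" using card_roots_dual_poly by simp
  then have "\<forall>k<n. (\<Sum>i<n. if k \<le> i then z i * a (i - k) ^ (q ^ k) else 0) = 0"
    using assms finite_roots_dual_poly
    by (intro q_poly_vanishing_eq_0) (auto simp: lincomb_root_solution)
  then show ?thesis
    by (intro upper_triangular_system_trivial[where T = "\<lambda>i k. a (i - k) ^ (q ^ k)"])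
      (auto simp: a0_neq_0)
qed

text \<open>On solutions, the \<open>q\<close>-th power of the linear form \<open>\<Sum> \<rho>\<^sub>j Y\<^sub>j\<close> is again a linear form, with
  coefficients \<open>\<Delta>\<^sup>-\<^sup>T \<rho>\<^sup>(\<^sup>q\<^sup>)\<close>; these are written out here.\<close>

definition frob_form :: "(nat \<Rightarrow> 'a) \<Rightarrow> nat \<Rightarrow> 'a"
  where "frob_form \<rho> i =
    (if i = 0 then (\<rho> (n - 1) ^ q - (\<Sum>j<n - 1. \<rho> j ^ q * a (Suc j))) / a 0
     else if i < n then \<rho> (i - 1) ^ q else 0)"

lemma Delta_solution_power_q:
  assumes "Delta_solution Y" and "n = Suc n'"
  shows "Y n' ^ q = Y 0 / a 0" and "j < n' \<Longrightarrow> Y j ^ q = Y (Suc j) - a (Suc j) * Y 0 / a 0"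
proof -
  have "Y 0 = a 0 * Y n' ^ q" using Delta_solutionD[OF assms(1), of 0] assms(2) by simp
  then show last: "Y n' ^ q = Y 0 / a 0" using a0_neq_0 by (simp add: field_simps)
  assume "j < n'"
  then have "Y (Suc j) = Y j ^ q + a (Suc j) * Y n' ^ q"
    using Delta_solutionD[OF assms(1), of "Suc j"] assms(2) by simp
  then show "Y j ^ q = Y (Suc j) - a (Suc j) * Y 0 / a 0" by (simp add: last)
qed

lemma frob_form_eval:
  assumes "Delta_solution Y"
  shows "(\<Sum>j<n. \<rho> j * Y j) ^ q = (\<Sum>j<n. frob_form \<rho> j * Y j)"
proof -
  obtain n' where n': "n = Suc n'" using n_pos by (cases n) auto
  note Yq = Delta_solution_power_q[OF assms n']
  have "(\<Sum>j<n. \<rho> j * Y j) ^ q = (\<Sum>j<n'. \<rho> j ^ q * Y j ^ q) + \<rho> n' ^ q * Y n' ^ q"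
    unfolding power_q_sum by (simp add: n' power_mult_distrib)
  also have "(\<Sum>j<n'. \<rho> j ^ q * Y j ^ q) =
      (\<Sum>j<n'. \<rho> j ^ q * Y (Suc j) - \<rho> j ^ q * a (Suc j) * Y 0 / a 0)"
    by (rule sum.cong) (simp_all add: Yq(2) right_diff_distrib)
  also have "\<dots> = (\<Sum>j<n'. \<rho> j ^ q * Y (Suc j)) - (\<Sum>j<n'. \<rho> j ^ q * a (Suc j)) * Y 0 / a 0"
    by (simp add: sum_subtractf sum_distrib_right sum_divide_distrib)
  also have "(\<Sum>j<n'. \<rho> j ^ q * Y (Suc j)) - (\<Sum>j<n'. \<rho> j ^ q * a (Suc j)) * Y 0 / a 0 +
      \<rho> n' ^ q * Y n' ^ q =
      (\<rho> n' ^ q - (\<Sum>j<n'. \<rho> j ^ q * a (Suc j))) / a 0 * Y 0 + (\<Sum>j<n'. \<rho> j ^ q * Y (Suc j))"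
    using a0_neq_0 by (simp add: Yq(1) field_simps)
  also have "\<dots> = (\<Sum>j<n. frob_form \<rho> j * Y j)"
    by (simp only: frob_form_def) (simp add: n' sum.lessThan_Suc_shift del: sum.lessThan_Suc)
  finally show ?thesis .
qed

lemma frob_form_in_K: "\<forall>j<n. \<rho> j \<in> K \<Longrightarrow> frob_form \<rho> i \<in> K"
  unfolding frob_form_def using subfield_K a_in_K n_pos by (auto intro!: subfield_closed)

lemma frob_form_dependence:
  assumes "\<forall>j<n. (\<Sum>k\<in>S. c k * frob_form (\<sigma> k) j) = 0"
  shows "\<forall>j<n. (\<Sum>k\<in>S. c k * \<sigma> k j ^ q) = 0"
proof -
  define n' where "n' = n - 1"
  have low: "(\<Sum>k\<in>S. c k * \<sigma> k j ^ q) = 0" if "j < n'" for j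
    using assms[rule_format, of "Suc j"] that by (simp add: n'_def frob_form_def)
  have term0: "frob_form (\<sigma> k) 0 * a 0 = \<sigma> k n' ^ q - (\<Sum>j<n'. \<sigma> k j ^ q * a (Suc j))" for k
    using a0_neq_0 by (simp add: frob_form_def n'_def)
  have "(\<Sum>k\<in>S. c k * frob_form (\<sigma> k) 0) * a 0 =
      (\<Sum>k\<in>S. c k * \<sigma> k n' ^ q - (\<Sum>j<n'. c k * \<sigma> k j ^ q * a (Suc j)))"
    by (simp add: sum_distrib_right mult.assoc term0 right_diff_distrib sum_distrib_left)
  also have "\<dots> = (\<Sum>k\<in>S. c k * \<sigma> k n' ^ q) - (\<Sum>j<n'. (\<Sum>k\<in>S. c k * \<sigma> k j ^ q) * a (Suc j))"
    unfolding sum_subtractf by (subst sum.swap) (simp add: sum_distrib_right)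
  finally have "(\<Sum>k\<in>S. c k * \<sigma> k n' ^ q) = 0" using assms n_pos low by simp
  with low show ?thesis unfolding n'_def by (metis Suc_pred' less_Suc_eq n_pos)
qed

lemma frob_iterate_eval:
  assumes "Delta_solution Y"
  shows "(\<Sum>j<n. \<rho> j * Y j) ^ (q ^ k) = (\<Sum>j<n. (frob_form ^^ k) \<rho> j * Y j)"
proof (induction k)
  case (Suc k)
  have "(\<Sum>j<n. \<rho> j * Y j) ^ (q ^ Suc k) = ((\<Sum>j<n. \<rho> j * Y j) ^ (q ^ k)) ^ q"
    by (simp add: power_mult[symmetric] mult.commute)
  then show ?case by (simp add: Suc frob_form_eval[OF assms])
qed simp

lemma frob_iterate_in_K: "\<forall>j<n. \<rho> j \<in> K \<Longrightarrow> j < n \<Longrightarrow> (frob_form ^^ k) \<rho> j \<in> K"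
  by (induction k arbitrary: j) (auto intro: frob_form_in_K)

lemma frob_iterates_shifted_dependence:
  assumes "\<forall>j<n. \<rho> j \<in> K" and "\<exists>k<d. c k \<noteq> 0"
    and "\<forall>j<n. (\<Sum>k<d. (frob_form ^^ Suc k) \<rho> j * c k) = 0"
  shows "has_nontrivial_solution K d {..<n} (\<lambda>j k. (frob_form ^^ k) \<rho> j)"
proof (rule has_nontrivial_solution_descends[OF subfield_K])
  have power_dep: "\<forall>j<n. (\<Sum>k<d. c k * ((frob_form ^^ k) \<rho> j) ^ q) = 0"
    using assms(3) by (intro frob_form_dependence) (simp add: mult.commute)
  define e where "e k = (SOME e. e ^ q = c k)" for k
  have e: "e k ^ q = c k" for k unfolding e_def by (rule someI_ex) (simp add: nth_root_exists)
  have "(\<Sum>k<d. (frob_form ^^ k) \<rho> j * e k) = 0" if "j < n" for j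
  proof -
    have "(\<Sum>k<d. (frob_form ^^ k) \<rho> j * e k) ^ q = (\<Sum>k<d. c k * ((frob_form ^^ k) \<rho> j) ^ q)"
      by (simp add: power_q_sum power_mult_distrib e mult.commute)
    then show ?thesis using power_dep that by simp
  qed
  moreover have "\<exists>k<d. e k \<noteq> 0"
  proof -
    obtain k where "k < d" "c k \<noteq> 0" using assms(2) by blast
    moreover have "e k \<noteq> 0" using e[of k] \<open>c k \<noteq> 0\<close> by (auto simp: zero_power)
    ultimately show ?thesis by blast
  qed
  ultimately show "has_nontrivial_solution UNIV d {..<n} (\<lambda>j k. (frob_form ^^ k) \<rho> j) \<or>
      (finite {..<n} \<and> card {..<n} < d)"
    unfolding has_nontrivial_solution_def by auto
qed (use assms(1) frob_iterate_in_K in blast)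

text \<open>A dependence of minimal length among \<open>\<rho>, \<rho>', \<rho>'', \<dots>\<close> has nonzero constant coefficient:
  otherwise a \<open>q\<close>-th root of it would be a shorter one.\<close>

lemma frob_iterates_dependence:
  assumes "\<forall>j<n. \<rho> j \<in> K"
  obtains c d where "\<forall>k\<le>d. c k \<in> K" and "c 0 \<noteq> 0"
    and "\<forall>j<n. (\<Sum>k<Suc d. (frob_form ^^ k) \<rho> j * c k) = 0"
proof -
  let ?dep = "\<lambda>d. has_nontrivial_solution K d {..<n} (\<lambda>j k. (frob_form ^^ k) \<rho> j)"
  have "?dep (Suc n)"
    using assms frob_iterate_in_K by (intro has_nontrivial_solution_descends[OF subfield_K]) auto
  define d where "d = (LEAST d. ?dep d)"
  have "?dep d" unfolding d_def by (rule LeastI) fact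
  then obtain c where c: "\<forall>k<d. c k \<in> K" "\<exists>k<d. c k \<noteq> 0"
      "\<forall>j<n. (\<Sum>k<d. (frob_form ^^ k) \<rho> j * c k) = 0"
    by (auto simp: has_nontrivial_solution_def)
  then obtain d' where d': "d = Suc d'" by (cases d) auto
  have "c 0 \<noteq> 0"
  proof
    assume "c 0 = 0"
    then have "\<forall>j<n. (\<Sum>k<d'. (frob_form ^^ Suc k) \<rho> j * c (Suc k)) = 0"
      using c(3) unfolding d' sum.lessThan_Suc_shift by simp
    moreover have "\<exists>k<d'. c (Suc k) \<noteq> 0"
      using c(2) \<open>c 0 = 0\<close> d' by (metis less_Suc_eq_0_disj Suc_less_eq)
    ultimately have "?dep d'" using assms by (intro frob_iterates_shifted_dependence)
    then have "d \<le> d'" unfolding d_def by (rule Least_le)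
    then show False using d' by simp
  qed
  then show thesis using c d' by (intro that[where d = d']) (auto simp: less_Suc_eq_le)
qed

lemma linear_form_in_sep_closure:
  assumes "\<forall>j<n. \<rho> j \<in> K" and "Delta_solution Y"
  shows "(\<Sum>j<n. \<rho> j * Y j) \<in> sep_closure K"
proof -
  obtain c d where c: "\<forall>k\<le>d. c k \<in> K" "c 0 \<noteq> 0"
      "\<forall>j<n. (\<Sum>k<Suc d. (frob_form ^^ k) \<rho> j * c k) = 0"
    by (rule frob_iterates_dependence[OF assms(1)])
  have "poly (q_poly c (Suc d)) (\<Sum>j<n. \<rho> j * Y j) =
      (\<Sum>k<Suc d. c k * (\<Sum>j<n. (frob_form ^^ k) \<rho> j * Y j))"
    by (simp only: poly_q_poly frob_iterate_eval[OF assms(2)])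
  also have "\<dots> = (\<Sum>k<Suc d. \<Sum>j<n. Y j * ((frob_form ^^ k) \<rho> j * c k))"
    by (simp only: sum_distrib_left mult_ac)
  also have "\<dots> = (\<Sum>j<n. Y j * (\<Sum>k<Suc d. (frob_form ^^ k) \<rho> j * c k))"
    by (subst sum.swap) (simp only: sum_distrib_left)
  also have "\<dots> = 0" using c(3) by simp
  finally show ?thesis by (rule q_poly_root_in_sep_closure[OF c(2,1)])
qed

lemma Delta_solution_in_splitting_field:
  assumes "Delta_solution Y" and "k < n"
  shows "Y k \<in> poly_splitting_field K f"
proof -
  let ?F = "poly_splitting_field K f"
  define R :: "((nat \<Rightarrow> 'a) \<times> 'a) set"
    where "R = {(\<lambda>i. v ^ (q ^ i), \<Sum>i<n. v ^ (q ^ i) * Y i) | v. poly f v = 0}"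
  have "\<forall>k<n. Y k \<in> ?F"
  proof (rule unique_solution_in_subfield[OF is_subfield_poly_splitting_field, of R])
    show "\<forall>(r, b)\<in>R. (\<forall>k<n. r k \<in> ?F) \<and> b \<in> ?F"
      using pairing_in_K[OF _ assms(1)] subset_poly_splitting_field
        root_in_poly_splitting_field[OF f_root_in_sep_closure]
      by (auto simp: R_def intro: subfield_power[OF is_subfield_poly_splitting_field])
    show "\<forall>(r, b)\<in>R. (\<Sum>k<n. r k * Y k) = b" by (auto simp: R_def)
    show "\<forall>k<n. y k = 0" if "\<forall>(r, b)\<in>R. (\<Sum>k<n. r k * y k) = 0" for y
      using that by (intro vanishing_on_roots_f_imp_zero) (auto simp: R_def)
  qed
  then show ?thesis using assms(2) by blast
qed

lemma root_in_field_of_solutions: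
  assumes F: "is_subfield F" "K \<subseteq> F"
    and solutions_in_F: "\<And>u k. poly dual_poly u = 0 \<Longrightarrow> k < n \<Longrightarrow> root_solution u k \<in> F"
    and v: "poly f v = 0"
  shows "v \<in> F"
proof -
  define R :: "((nat \<Rightarrow> 'a) \<times> 'a) set"
    where "R = {(root_solution u, \<Sum>i<n. v ^ (q ^ i) * root_solution u i) | u. poly dual_poly u = 0}"
  have "\<forall>i<n. v ^ (q ^ i) \<in> F"
  proof (rule unique_solution_in_subfield[OF F(1), of R])
    show "\<forall>(r, b)\<in>R. (\<forall>k<n. r k \<in> F) \<and> b \<in> F"
      using solutions_in_F pairing_in_K[OF v Delta_solution_root_solution] F(2) by (auto simp: R_def)
    show "\<forall>(r, b)\<in>R. (\<Sum>k<n. r k * v ^ (q ^ k)) = b" by (auto simp: R_def mult.commute)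
    show "\<forall>k<n. y k = 0" if "\<forall>(r, b)\<in>R. (\<Sum>k<n. r k * y k) = 0" for y
      using that by (intro vanishing_on_root_solutions_imp_zero) (auto simp: R_def mult.commute)
  qed
  then show ?thesis using n_pos by force
qed

end


section \<open>The system \<open>B X\<^sup>(\<^sup>q\<^sup>) = X\<close>\<close>

lemma splitting_fields_dim_0:
  assumes "is_subfield K"
  shows "system_splitting_field K q 0 B = poly_splitting_field K (add_poly q 0 a)"
proof -
  have "poly (add_poly q 0 a) y = y" for y by (simp add: add_poly_def poly_monom)
  then have "{y. y \<in> sep_closure K \<and> poly (add_poly q 0 a) y = 0} \<subseteq> K"
    using subfield_zero[OF assms] by auto
  then show ?thesis by (simp add: system_splitting_field_def poly_splitting_field_def Un_absorb2)
qed

locale conjugated_system = companion_system +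
  fixes B N Ninv :: "'a::alg_closed_field mat"
  assumes B_carrier: "B \<in> carrier_mat n n" and N_carrier: "N \<in> carrier_mat n n"
    and Ninv_carrier: "Ninv \<in> carrier_mat n n"
    and N_in_K: "elements_mat N \<subseteq> K" and Ninv_N: "Ninv * N = 1\<^sub>m n"
    and conjugate: "Ninv * B * mat_qpow q N = Delta n a"
begin

lemma N_Ninv: "N * Ninv = 1\<^sub>m n"
  by (rule mat_mult_left_right_inverse[OF Ninv_carrier N_carrier Ninv_N])

lemma Ninv_in_K: "elements_mat Ninv \<subseteq> K"
  by (rule inverse_mat_in_subfield[OF subfield_K N_carrier N_in_K Ninv_carrier Ninv_N])

lemma Nq_carrier: "mat_qpow q N \<in> carrier_mat n n"
  and Ninvq_carrier: "mat_qpow q Ninv \<in> carrier_mat n n"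
  using N_carrier Ninv_carrier by simp_all

lemma Nq_Ninvq: "mat_qpow q N * mat_qpow q Ninv = 1\<^sub>m n"
  using mat_qpow_mult[OF prime_CHAR q_def N_carrier Ninv_carrier] N_Ninv by (simp add: mat_qpow_one)

lemma N_Delta: "N * Delta n a = B * mat_qpow q N"
proof -
  have "N * Delta n a = N * (Ninv * (B * mat_qpow q N))"
    unfolding conjugate[symmetric] using Ninv_carrier B_carrier Nq_carrier
    by (simp add: assoc_mult_mat[of _ n n _ n _ n])
  also have "\<dots> = (N * Ninv) * (B * mat_qpow q N)"
    using N_carrier Ninv_carrier B_carrier Nq_carrier
    by (simp add: assoc_mult_mat[of _ n n _ n _ n])
  finally show ?thesis using N_Ninv B_carrier Nq_carrier by simp
qed

lemma solution_imp_Delta_solution: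
  assumes X: "X \<in> carrier_vec n" "B *\<^sub>v vec_qpow q X = X"
  shows "Delta_solution (\<lambda>j. (Ninv *\<^sub>v X) $ j)"
proof -
  have Xq: "vec_qpow q X \<in> carrier_vec n" using X(1) by simp
  have "Delta n a *\<^sub>v vec_qpow q (Ninv *\<^sub>v X) =
      (Ninv * B * mat_qpow q N) *\<^sub>v (mat_qpow q Ninv *\<^sub>v vec_qpow q X)"
    by (simp add: conjugate vec_qpow_mult[OF prime_CHAR q_def Ninv_carrier X(1)])
  also have "\<dots> = Ninv *\<^sub>v (B *\<^sub>v ((mat_qpow q N * mat_qpow q Ninv) *\<^sub>v vec_qpow q X))"
    using Ninv_carrier B_carrier Nq_carrier mult_carrier_mat[OF B_carrier Nq_carrier]
      Ninvq_carrier Xq mult_mat_vec_carrier[OF Ninvq_carrier Xq]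
    by (simp add: assoc_mult_mat_vec[of _ n n _ n])
  also have "\<dots> = Ninv *\<^sub>v X" using Nq_Ninvq X by simp
  finally have "Delta n a *\<^sub>v vec_qpow q (Ninv *\<^sub>v X) = Ninv *\<^sub>v X" .
  moreover have "vec n (\<lambda>j. (Ninv *\<^sub>v X) $ j) = Ninv *\<^sub>v X"
    using Ninv_carrier by (intro eq_vecI) auto
  ultimately show ?thesis unfolding Delta_solution_iff by simp
qed

lemma Delta_solution_imp_solution:
  assumes "Delta_solution Y"
  shows "B *\<^sub>v vec_qpow q (N *\<^sub>v vec n Y) = N *\<^sub>v vec n Y"
proof -
  have Yq: "vec_qpow q (vec n Y) \<in> carrier_vec n" by simp
  have "B *\<^sub>v vec_qpow q (N *\<^sub>v vec n Y) = (B * mat_qpow q N) *\<^sub>v vec_qpow q (vec n Y)"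
    using B_carrier Nq_carrier Yq
    by (simp add: vec_qpow_mult[OF prime_CHAR q_def N_carrier] assoc_mult_mat_vec[of _ n n _ n])
  also have "\<dots> = N *\<^sub>v (Delta n a *\<^sub>v vec_qpow q (vec n Y))"
    using N_carrier Yq by (simp add: N_Delta[symmetric] assoc_mult_mat_vec[of _ n n _ n])
  finally show ?thesis using assms by (simp add: Delta_solution_iff)
qed

lemma N_Ninv_vec: "X \<in> carrier_vec n \<Longrightarrow> N *\<^sub>v (Ninv *\<^sub>v X) = X"
  and Ninv_N_vec: "X \<in> carrier_vec n \<Longrightarrow> Ninv *\<^sub>v (N *\<^sub>v X) = X"
  using N_Ninv Ninv_N N_carrier Ninv_carrier
  by (simp_all flip: assoc_mult_mat_vec[of _ n n _ n])

lemma system_splitting_field_subset: "system_splitting_field K q n B \<subseteq> poly_splitting_field K f"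
proof (rule system_splitting_field_least[OF is_subfield_poly_splitting_field subset_poly_splitting_field])
  fix X i assume X: "X \<in> carrier_vec n" "B *\<^sub>v vec_qpow q X = X" and "i < n"
  have Y_in_F: "\<forall>j<n. (Ninv *\<^sub>v X) $ j \<in> poly_splitting_field K f"
    using Delta_solution_in_splitting_field[OF solution_imp_Delta_solution[OF X]] by blast
  have "(N *\<^sub>v (Ninv *\<^sub>v X)) $ i \<in> poly_splitting_field K f"
    by (rule mult_mat_vec_in_subfield[OF is_subfield_poly_splitting_field N_carrier
          order_trans[OF N_in_K subset_poly_splitting_field] _ Y_in_F \<open>i < n\<close>])
      (use X(1) Ninv_carrier in simp)
  then show "X $ i \<in> poly_splitting_field K f" using N_Ninv_vec[OF X(1)] by simp
qed

lemma poly_splitting_field_subset: "poly_splitting_field K f \<subseteq> system_splitting_field K q n B"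
proof (rule poly_splitting_field_least[OF is_subfield_system_splitting_field subset_system_splitting_field])
  let ?F = "system_splitting_field K q n B"
  fix v assume "poly f v = 0"
  then show "v \<in> ?F"
  proof (rule root_in_field_of_solutions[OF is_subfield_system_splitting_field subset_system_splitting_field, rotated])
    fix u k assume u: "poly dual_poly u = 0" and "k < n"
    define X where "X = N *\<^sub>v vec n (root_solution u)"
    have X: "X \<in> carrier_vec n" "B *\<^sub>v vec_qpow q X = X"
      unfolding X_def using N_carrier Delta_solution_imp_solution[OF Delta_solution_root_solution[OF u]]
      by auto
    have "X $ j \<in> sep_closure K" if "j < n" for j
    proof -
      have "X $ j = (\<Sum>k<n. N $$ (j, k) * root_solution u k)"
        unfolding X_def index_mult_mat_vec_sum[OF N_carrier vec_carrier that] by simp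
      also have "\<dots> \<in> sep_closure K"
        using N_carrier N_in_K that by (intro linear_form_in_sep_closure Delta_solution_root_solution u) auto
      finally show ?thesis .
    qed
    then have X_in_F: "\<forall>j<n. X $ j \<in> ?F" using X by (blast intro: solution_in_system_splitting_field)
    have "(Ninv *\<^sub>v X) $ k \<in> ?F"
      by (rule mult_mat_vec_in_subfield[OF is_subfield_system_splitting_field Ninv_carrier
            order_trans[OF Ninv_in_K subset_system_splitting_field] X(1) X_in_F \<open>k < n\<close>])
    then show "root_solution u k \<in> ?F" using \<open>k < n\<close> by (simp add: X_def Ninv_N_vec)
  qed
qed

end

theorem corollary4p5:
  fixes K :: "'a::alg_closed_field set" and p m q n :: nat
    and B N Ninv :: "'a mat" and a :: "nat \<Rightarrow> 'a"
  assumes "is_subfield K" and "infinite K"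
    and "prime p" and "CHAR('a) = p" and "m \<ge> 1" and "q = p ^ m"
    and "{x. x ^ q = x} \<subseteq> K"
    and "B \<in> carrier_mat n n" and "elements_mat B \<subseteq> K" and "invertible_mat B"
    and "N \<in> carrier_mat n n" and "elements_mat N \<subseteq> K" and "invertible_mat N"
    and "Ninv \<in> carrier_mat n n" and "Ninv * N = 1\<^sub>m n"
    and "\<forall>i<n. a i \<in> K"
    and "Ninv * B * mat_qpow q N = Delta n a"
  shows "system_splitting_field K q n B = poly_splitting_field K (add_poly q n a)"
proof (cases "n = 0")
  case True
  then show ?thesis using splitting_fields_dim_0[OF assms(1)] by simp
next
  case False
  have CHAR: "prime CHAR('a)" "q = CHAR('a) ^ m" using assms(3,4,6) by simp_all
  have "a 0 \<noteq> 0"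
    by (rule Delta_first_coeff_neq_0[OF CHAR _ assms(8,10,11,14,15,17)]) (use False in simp)
  then interpret conjugated_system K q m n a B N Ninv
    using assms CHAR False by unfold_locales auto
  show ?thesis using system_splitting_field_subset poly_splitting_field_subset by (rule antisym)
qed

end
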